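(* For every integer $T>0$, every $\varepsilon,m>0$, $\delta\in(0,1)$, and every pair of distinct edges $a\ne f$ of the lattice of size $T$, writing $A(a\to f)=A(a\to f;m,\varepsilon,\delta,T)$, $$A(a\to f)=\begin{cases}A(f\to a),&\text{if }a\perp f,\\ -A(f\to a),&\text{if }a\parallel f.\end{cases}$$
   Context: Fix an integer $T>0$, $\varepsilon,m>0$, $\delta\in(0,1)$. The lattice is $\{(x,t)\in[0,T\varepsilon]^2: 2x/\varepsilon,2t/\varepsilon,(x+t)/\varepsilon\in\mathbb{Z}\}$ modulo $(x,0)\sim(x,T\varepsilon)$, $(0,t)\sim(T\varepsilon,t)$. A lattice point is even/odd if $2x/\varepsilon$ is even/odd. An edge is a vector from a lattice point $(x,t)$ to $(x+\varepsilon/2,t+\varepsilon/2)$ or $(x-\varepsilon/2,t+\varepsilon/2)$; two edges are thus either parallel or orthogonal. A path is a finite sequence of distinct edges, each ending where the next starts. A cycle is a sequence of edges, each ending where the next starts, whose first and last edges coincide, with no other repetitions and at least one edge in between; a loop is a cycle up to cyclic change of the starting edge. A node of a path/loop $s$ is an ordered pair of consecutive edges of $s$; a turn is a node with orthogonal edges; a node/turn is even/odd according to the endpoint of its first edge. The arrow is $A(s)=\pm\frac{(-im\varepsilon)^{\mathrm{oddturns}(s)}(-\delta)^{\mathrm{eventurns}(s)}}{(1+m^2\varepsilon^2)^{\mathrm{oddnodes}(s)/2}(1-\delta^2)^{\mathrm{evennodes}(s)/2}}$, minus iff $s$ is a loop. A loop configuration is a set of pairwise edge-disjoint loops; one with source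 $a$ and sink $f$ is an edge-disjoint set of loops and exactly one path starting with $a$ and ending with $f$. Its arrow $A(S)$ is the product of arrows of its members (empty product $1$). The finite-lattice propagator is $A(a\to f;m,\varepsilon,\delta,T):=\frac{\sum_{S\text{ with source }a,\text{ sink }f}A(S)}{\sum_S A(S)}$ (denominator over all loop configurations; it is known to be nonzero). *)

theory Defs
  imports Complex_Main
begin

text \<open>Coordinates are rescaled: a lattice point (x,t) is encoded by the pair
  (X,Y) = (2x/eps, 2t/eps) taken modulo 2T (periodic identification), with X+Y even.
  An edge is encoded by its starting point and its direction:
  True = towards (x+eps/2, t+eps/2), False = towards (x-eps/2, t+eps/2).\<close>

type_synonym edge = "nat \<times> nat \<times> bool"

definition lattice_edges :: "nat \<Rightarrow> edge set" where
  "lattice_edges T = {(x, y, d). x < 2 * T \<and> y < 2 * T \<and> even (x + y)}"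

definition edge_start :: "edge \<Rightarrow> nat \<times> nat" where
  "edge_start e = (case e of (x, y, d) \<Rightarrow> (x, y))"

definition edge_dir :: "edge \<Rightarrow> bool" where
  "edge_dir e = (case e of (x, y, d) \<Rightarrow> d)"

definition edge_end :: "nat \<Rightarrow> edge \<Rightarrow> nat \<times> nat" where
  "edge_end T e = (case e of (x, y, d) \<Rightarrow>
     ((if d then x + 1 else x + 2 * T - 1) mod (2 * T), (y + 1) mod (2 * T)))"

definition parallel :: "edge \<Rightarrow> edge \<Rightarrow> bool" where
  "parallel e e' \<longleftrightarrow> edge_dir e = edge_dir e'"

definition orthogonal :: "edge \<Rightarrow> edge \<Rightarrow> bool" where
  "orthogonal e e' \<longleftrightarrow> edge_dir e \<noteq> edge_dir e'"

definition chained :: "nat \<Rightarrow> edge list \<Rightarrow> bool" where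
  "chained T s \<longleftrightarrow> (\<forall>i. Suc i < length s \<longrightarrow> edge_end T (s ! i) = edge_start (s ! Suc i))"

definition is_path :: "nat \<Rightarrow> edge list \<Rightarrow> bool" where
  "is_path T p \<longleftrightarrow> p \<noteq> [] \<and> set p \<subseteq> lattice_edges T \<and> distinct p \<and> chained T p"

definition is_cycle :: "nat \<Rightarrow> edge list \<Rightarrow> bool" where
  "is_cycle T c \<longleftrightarrow> length c \<ge> 3 \<and> hd c = last c \<and> distinct (butlast c)
      \<and> set c \<subseteq> lattice_edges T \<and> chained T c"

definition cyclic_shift :: "edge list \<Rightarrow> edge list \<Rightarrow> bool" where
  "cyclic_shift c c' \<longleftrightarrow> (\<exists>n. c' = rotate n (butlast c) @ [hd (rotate n (butlast c))])"

definition loops :: "nat \<Rightarrow> edge list set set" where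
  "loops T = {{c'. is_cycle T c' \<and> cyclic_shift c c'} | c. is_cycle T c}"

definition loop_edges :: "edge list set \<Rightarrow> edge set" where
  "loop_edges L = (\<Union>c\<in>L. set c)"

text \<open>Nodes: ordered pairs of consecutive edges (for a cycle this includes the wrap-around pair).\<close>
definition nodes :: "edge list \<Rightarrow> (edge \<times> edge) list" where
  "nodes s = zip s (tl s)"

definition is_turn :: "edge \<times> edge \<Rightarrow> bool" where
  "is_turn n \<longleftrightarrow> orthogonal (fst n) (snd n)"

text \<open>A node is even/odd according to the (end)point of its first edge, i.e. the vertex
  shared by the two edges; a point is even iff its rescaled x-coordinate 2x/eps is even.\<close>
definition node_even :: "nat \<Rightarrow> edge \<times> edge \<Rightarrow> bool" where
  "node_even T n \<longleftrightarrow> even (fst (edge_end T (fst n)))"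

definition arrow_unsigned :: "nat \<Rightarrow> real \<Rightarrow> real \<Rightarrow> real \<Rightarrow> edge list \<Rightarrow> complex" where
  "arrow_unsigned T m \<epsilon> \<delta> s =
     (let ns = nodes s;
          oddturns = length (filter (\<lambda>n. is_turn n \<and> \<not> node_even T n) ns);
          eventurns = length (filter (\<lambda>n. is_turn n \<and> node_even T n) ns);
          oddnodes = length (filter (\<lambda>n. \<not> node_even T n) ns);
          evennodes = length (filter (\<lambda>n. node_even T n) ns)
      in ((- \<i> * complex_of_real (m * \<epsilon>)) ^ oddturns * complex_of_real ((- \<delta>) ^ eventurns))
         / complex_of_real ((1 + m\<^sup>2 * \<epsilon>\<^sup>2) powr (real oddnodes / 2)
                            * (1 - \<delta>\<^sup>2) powr (real evennodes / 2)))"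

definition arrow_path :: "nat \<Rightarrow> real \<Rightarrow> real \<Rightarrow> real \<Rightarrow> edge list \<Rightarrow> complex" where
  "arrow_path T m \<epsilon> \<delta> p = arrow_unsigned T m \<epsilon> \<delta> p"

text \<open>Arrow of a loop (minus sign); computed on any representing cycle
  (the value does not depend on the choice).\<close>
definition arrow_loop :: "nat \<Rightarrow> real \<Rightarrow> real \<Rightarrow> real \<Rightarrow> edge list set \<Rightarrow> complex" where
  "arrow_loop T m \<epsilon> \<delta> L = - arrow_unsigned T m \<epsilon> \<delta> (SOME c. c \<in> L)"

definition loop_configs :: "nat \<Rightarrow> edge list set set set" where
  "loop_configs T = {S. S \<subseteq> loops T \<and>
     (\<forall>L1\<in>S. \<forall>L2\<in>S. L1 \<noteq> L2 \<longrightarrow> loop_edges L1 \<inter> loop_edges L2 = {})}"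

definition source_sink_configs :: "nat \<Rightarrow> edge \<Rightarrow> edge \<Rightarrow> (edge list set set \<times> edge list) set" where
  "source_sink_configs T a f = {(S, p). S \<in> loop_configs T \<and> is_path T p \<and> hd p = a \<and> last p = f
      \<and> (\<forall>L\<in>S. loop_edges L \<inter> set p = {})}"

definition arrow_config :: "nat \<Rightarrow> real \<Rightarrow> real \<Rightarrow> real \<Rightarrow> edge list set set \<Rightarrow> complex" where
  "arrow_config T m \<epsilon> \<delta> S = (\<Prod>L\<in>S. arrow_loop T m \<epsilon> \<delta> L)"

definition propagator :: "edge \<Rightarrow> edge \<Rightarrow> real \<Rightarrow> real \<Rightarrow> real \<Rightarrow> nat \<Rightarrow> complex" where
  "propagator a f m \<epsilon> \<delta> T =
     (\<Sum>(S, p)\<in>source_sink_configs T a f. arrow_config T m \<epsilon> \<delta> S * arrow_path T m \<epsilon> \<delta> p)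
     / (\<Sum>S\<in>loop_configs T. arrow_config T m \<epsilon> \<delta> S)"

end

(*
  Write the arrow of a path or loop as the product of the weights of its nodes.  Then the
  numerators N(a,e) of the propagator satisfy the lattice Dirac equation
    sum_e N(a,e) (delta(e,f) - U(e,f)) = delta(a,f) Z,
  where U(e,f) is the weight of the node (e,f) (zero unless e ends where f starts) and Z is
  the denominator: in sum_e N(a,e) U(e,f) the configurations whose path already passes
  through f cancel against those having f on a loop, since cutting the path at f closes off
  a loop, and the arrow of a loop carries a minus sign.  So G = N/Z is a left inverse of
  I - U.  At each vertex U is the 2x2 block [[1, t], [t, 1]] / sqrt (1 - t^2) with t = -delta
  or t = -i m eps, hence U S U^T = S for the diagonal matrix S = +-1 given by the direction
  of the edges.  These two identities force S G^T S = I - G, which for a ~= f is the claimed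
  (anti)symmetry.
*)
theory Submission
  imports Defs
begin

lemma zip_rotate:
  "length xs = length ys \<Longrightarrow> zip (rotate n xs) (rotate n ys) = rotate n (zip xs ys)"
proof (rule nth_equalityI)
  fix i assume "length xs = length ys" "i < length (zip (rotate n xs) (rotate n ys))"
  moreover have "0 < length ys" using calculation by (cases ys) auto
  moreover have "(n + i) mod length ys < length ys" using calculation by simp
  ultimately show "zip (rotate n xs) (rotate n ys) ! i = rotate n (zip xs ys) ! i"
    by (simp add: nth_rotate)
qed simp

lemma prod_list_rotate: "prod_list (rotate n xs) = prod_list (xs :: 'a :: comm_monoid_mult list)"
proof (induction n)
  case (Suc n)
  then show ?case by (cases "rotate n xs") (simp_all add: mult.commute)
qed simp

lemma mod_add_right_cancel_less:
  fixes x x' k N :: nat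
  assumes "x < N" "x' < N" "(x + k) mod N = (x' + k) mod N"
  shows "x = x'"
proof -
  have shift_back: "(y + k + (N - k mod N)) mod N = y" if "y < N" for y
  proof -
    have "(y + k + (N - k mod N)) mod N = (y + (k mod N + (N - k mod N))) mod N"
      by (metis add.assoc mod_add_left_eq mod_add_right_eq)
    also have "\<dots> = y" using that by simp
    finally show ?thesis .
  qed
  have "(x + k + (N - k mod N)) mod N = (x' + k + (N - k mod N)) mod N"
    using assms(3) by (metis mod_add_left_eq)
  then show ?thesis using shift_back assms(1,2) by simp
qed

lemma two_by_two_sign_orthogonal:
  fixes t K :: "'a :: field"
  assumes "K * K = 1 - t * t" "K \<noteq> 0"
  defines "u \<equiv> \<lambda>x y. (if x = y then 1 else t) / K"
  shows "u x True * u y True - u x False * u y False = of_bool (x = y) * (if x then 1 else -1)"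
  using assms by (cases x; cases y) (simp_all add: field_simps)

lemma left_inverse_sign_symmetry:
  fixes G U :: "'e \<Rightarrow> 'e \<Rightarrow> 'a::comm_ring_1" and s :: "'e \<Rightarrow> 'a"
  assumes fin: "finite E"
    and inv: "\<And>a f. a \<in> E \<Longrightarrow> f \<in> E \<Longrightarrow> (\<Sum>e\<in>E. G a e * (of_bool (e = f) - U e f)) = of_bool (a = f)"
    and orth: "\<And>c c'. c \<in> E \<Longrightarrow> c' \<in> E \<Longrightarrow> (\<Sum>b\<in>E. U c b * s b * U c' b) = of_bool (c = c') * s c"
    and sign: "\<And>e. s e * s e = 1"
    and "a \<in> E" "f \<in> E"
  shows "s a * s f * G f a = of_bool (a = f) - G a f"
proof -
  define H where "H b x = s b * s x * G x b" for b x
  \<comment> \<open>H = S G^T S satisfies (I - U) H = -U, hence H = G (I - U) H = -G U = I - G.\<close>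
  have expand: "G x b = of_bool (x = b) + (\<Sum>e\<in>E. G x e * U e b)" if "x \<in> E" "b \<in> E" for x b
  proof -
    have "G x b - (\<Sum>e\<in>E. G x e * U e b) = of_bool (x = b)"
      using inv[OF that] that fin by (simp add: right_diff_distrib sum_subtractf)
    then show ?thesis by (metis diff_add_cancel add.commute)
  qed
  have UH: "(\<Sum>b\<in>E. U c b * H b x) = U c x + s x * s c * G x c" if "c \<in> E" "x \<in> E" for c x
  proof -
    have "(\<Sum>b\<in>E. U c b * H b x) = s x * (\<Sum>b\<in>E. G x b * (s b * U c b))"
      by (simp add: H_def sum_distrib_left mult_ac)
    also have "(\<Sum>b\<in>E. G x b * (s b * U c b))
        = (\<Sum>b\<in>E. (of_bool (x = b) + (\<Sum>e\<in>E. G x e * U e b)) * (s b * U c b))"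
      using that(2) by (intro sum.cong refl) (metis expand)
    also have "\<dots> = s x * U c x + (\<Sum>b\<in>E. \<Sum>e\<in>E. G x e * (U e b * s b * U c b))"
      using that fin by (simp add: distrib_right sum.distrib sum_distrib_right mult.assoc)
    also have "(\<Sum>b\<in>E. \<Sum>e\<in>E. G x e * (U e b * s b * U c b))
        = (\<Sum>e\<in>E. G x e * (of_bool (e = c) * s e))"
      using that fin by (subst sum.swap) (simp add: sum_distrib_left[symmetric] orth)
    also have "\<dots> = G x c * s c"
      using that fin by (simp add: of_bool_def if_distrib if_distribR cong: if_cong)
    finally show ?thesis by (simp add: distrib_left mult.assoc[symmetric] sign)
  qed
  have MH: "(\<Sum>b\<in>E. (of_bool (c = b) - U c b) * H b x) = - U c x" if "c \<in> E" "x \<in> E" for c x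
    using that fin UH[OF that] by (simp add: left_diff_distrib sum_subtractf H_def)
  have "H a f = (\<Sum>b\<in>E. (\<Sum>c\<in>E. G a c * (of_bool (c = b) - U c b)) * H b f)"
    using assms(5) fin by (simp add: inv)
  also have "\<dots> = (\<Sum>c\<in>E. G a c * (\<Sum>b\<in>E. (of_bool (c = b) - U c b) * H b f))"
    by (simp add: sum_distrib_left sum_distrib_right mult.assoc) (rule sum.swap)
  also have "\<dots> = of_bool (a = f) - G a f"
    using expand[OF assms(5,6)] assms(6) by (simp add: MH sum_negf)
  finally show ?thesis by (simp add: H_def)
qed

lemma edge_end_neq_edge_start:
  assumes "0 < T" "e \<in> lattice_edges T" shows "edge_end T e \<noteq> edge_start e"
proof -
  obtain x y d where e: "e = (x, y, d)" by (cases e)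
  then have "y < 2 * T" using assms by (simp add: lattice_edges_def)
  have "(y + 1) mod (2 * T) \<noteq> y"
  proof (cases "y + 1 = 2 * T")
    case True
    then have "0 < y" using assms(1) by linarith
    then show ?thesis using True by simp
  qed (use \<open>y < 2 * T\<close> in simp)
  then show ?thesis using e by (simp add: edge_end_def edge_start_def)
qed

lemma edge_end_inj:
  assumes "0 < T" "c \<in> lattice_edges T" "c' \<in> lattice_edges T"
    "edge_end T c = edge_end T c'" "edge_dir c = edge_dir c'"
  shows "c = c'"
proof -
  obtain x y d x' y' where c: "c = (x, y, d)" "c' = (x', y', d)"
    using assms(5) by (cases c, cases c') (auto simp: edge_dir_def)
  have bounds: "x < 2 * T" "y < 2 * T" "x' < 2 * T" "y' < 2 * T"
    using assms(2,3) by (auto simp: c lattice_edges_def)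
  have "(y + 1) mod (2 * T) = (y' + 1) mod (2 * T)"
    "(x + (if d then 1 else 2 * T - 1)) mod (2 * T)
       = (x' + (if d then 1 else 2 * T - 1)) mod (2 * T)"
    using assms(1,4) by (simp_all add: c edge_end_def split: if_splits)
  then have "y = y'" "x = x'"
    using mod_add_right_cancel_less[OF bounds(2,4)] mod_add_right_cancel_less[OF bounds(1,3)]
    by blast+
  then show ?thesis by (simp add: c)
qed

lemma edge_end_in_lattice:
  assumes "0 < T" "c \<in> lattice_edges T"
  shows "(fst (edge_end T c), snd (edge_end T c), d) \<in> lattice_edges T"
proof -
  obtain x y d' where c: "c = (x, y, d')" by (cases c)
  have "even (x + y)" using assms(2) by (simp add: c lattice_edges_def)
  have sum: "(if d' then x + 1 else x + 2 * T - 1) + (y + 1) = x + y + (if d' then 2 else 2 * T)"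
    using assms(1) by auto
  have "even ((if d' then x + 1 else x + 2 * T - 1) + (y + 1))"
    unfolding sum using \<open>even (x + y)\<close> by simp
  moreover have "even (n mod (2 * T)) \<longleftrightarrow> even n" for n :: nat
    by (simp add: dvd_mod_iff)
  ultimately show ?thesis
    using assms(1) by (simp add: c edge_end_def lattice_edges_def)
qed

lemma finite_lattice_edges: "finite (lattice_edges T)"
proof -
  have "lattice_edges T \<subseteq> {..<2 * T} \<times> {..<2 * T} \<times> UNIV" by (auto simp: lattice_edges_def)
  then show ?thesis by (rule finite_subset) auto
qed

lemma chained_Nil [simp]: "chained T []"
  by (simp add: chained_def)

lemma chained_singleton [simp]: "chained T [e]"
  by (simp add: chained_def)

lemma chained_Cons:
  "chained T (x # xs) \<longleftrightarrow> (xs = [] \<or> edge_end T x = edge_start (hd xs)) \<and> chained T xs"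
  by (cases xs) (auto simp: chained_def nth_Cons split: nat.split)

lemma chained_append:
  "chained T (p @ q) \<longleftrightarrow>
     chained T p \<and> chained T q \<and> (p \<noteq> [] \<and> q \<noteq> [] \<longrightarrow> edge_end T (last p) = edge_start (hd q))"
  by (induction p) (auto simp: chained_Cons)

lemma is_path_snoc:
  "is_path T (p @ [f]) \<longleftrightarrow>
     (p = [] \<or> is_path T p \<and> edge_end T (last p) = edge_start f) \<and> f \<notin> set p \<and> f \<in> lattice_edges T"
  by (auto simp: is_path_def chained_append)

lemma finite_paths: "finite {p. is_path T p}"
  by (rule finite_subset[OF _ finite_subset_distinct[OF finite_lattice_edges]])
    (auto simp: is_path_def)

lemma nodes_Cons: "nodes (x # xs) = (if xs = [] then [] else (x, hd xs) # nodes xs)"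
  by (cases xs) (auto simp: nodes_def)

lemma nodes_append:
  "q \<noteq> [] \<Longrightarrow> r \<noteq> [] \<Longrightarrow> nodes (q @ r) = nodes q @ (last q, hd r) # nodes r"
  by (induction q) (auto simp: nodes_Cons)

lemma nodes_closed: "nodes (r @ [hd r]) = zip r (rotate1 r)"
proof (cases "r = []")
  case False
  then have "tl (r @ [hd r]) = rotate1 r" by (simp add: rotate1_hd_tl)
  then show ?thesis by (simp add: nodes_def zip_append1)
qed (simp add: nodes_def)

section \<open>Arrows as products of node weights\<close>

definition node_weight :: "nat \<Rightarrow> real \<Rightarrow> real \<Rightarrow> real \<Rightarrow> edge \<times> edge \<Rightarrow> complex" where
  "node_weight T m \<epsilon> \<delta> n = (if node_even T n
      then (if is_turn n then complex_of_real (- \<delta>) else 1) / complex_of_real (sqrt (1 - \<delta>\<^sup>2))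
      else (if is_turn n then - \<i> * complex_of_real (m * \<epsilon>) else 1) / complex_of_real (sqrt (1 + m\<^sup>2 * \<epsilon>\<^sup>2)))"

definition path_weight :: "nat \<Rightarrow> real \<Rightarrow> real \<Rightarrow> real \<Rightarrow> edge list \<Rightarrow> complex" where
  "path_weight T m \<epsilon> \<delta> p = prod_list (map (node_weight T m \<epsilon> \<delta>) (nodes p))"

lemma powr_half_nat: "0 < x \<Longrightarrow> x powr (real k / 2) = sqrt x ^ k"
  by (simp add: sqrt_def root_powr_inverse powr_powr powr_realpow[symmetric] field_simps)

lemma arrow_unsigned_eq_path_weight:
  assumes "\<delta>\<^sup>2 < 1"
  shows "arrow_unsigned T m \<epsilon> \<delta> s = path_weight T m \<epsilon> \<delta> s"
proof -
  define c0 c1 where "c0 = sqrt (1 - \<delta>\<^sup>2)" and "c1 = sqrt (1 + m\<^sup>2 * \<epsilon>\<^sup>2)"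
  have pos: "0 < 1 - \<delta>\<^sup>2" "0 < 1 + m\<^sup>2 * \<epsilon>\<^sup>2"
    using assms by (simp_all add: add_pos_nonneg)
  then have "c0 \<noteq> 0" "c1 \<noteq> 0" by (simp_all add: c0_def c1_def)
  have weight: "node_weight T m \<epsilon> \<delta> n = (if node_even T n
      then (if is_turn n then complex_of_real (- \<delta>) else 1) / complex_of_real c0
      else (if is_turn n then - \<i> * complex_of_real (m * \<epsilon>) else 1) / complex_of_real c1)" for n
    by (simp add: node_weight_def c0_def c1_def)
  have "((- \<i> * complex_of_real (m * \<epsilon>)) ^ length (filter (\<lambda>n. is_turn n \<and> \<not> node_even T n) ns)
          * complex_of_real ((- \<delta>) ^ length (filter (\<lambda>n. is_turn n \<and> node_even T n) ns)))
         / complex_of_real (c1 ^ length (filter (\<lambda>n. \<not> node_even T n) ns)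
                            * c0 ^ length (filter (\<lambda>n. node_even T n) ns))
       = prod_list (map (node_weight T m \<epsilon> \<delta>) ns)" for ns
  proof (induction ns)
    case (Cons n ns)
    then show ?case
      unfolding list.map prod_list.Cons Cons.IH[symmetric] weight
      using \<open>c0 \<noteq> 0\<close> \<open>c1 \<noteq> 0\<close>
      by (cases "node_even T n"; cases "is_turn n") (simp_all add: field_simps)
  qed simp
  then show ?thesis
    by (simp add: arrow_unsigned_def path_weight_def Let_def powr_half_nat[OF pos(1)]
        powr_half_nat[OF pos(2)] c0_def c1_def)
qed

lemma path_weight_singleton [simp]: "path_weight T m \<epsilon> \<delta> [e] = 1"
  by (simp add: path_weight_def nodes_def)

lemma path_weight_append:
  "q \<noteq> [] \<Longrightarrow> r \<noteq> [] \<Longrightarrow>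
   path_weight T m \<epsilon> \<delta> (q @ r)
     = path_weight T m \<epsilon> \<delta> q * node_weight T m \<epsilon> \<delta> (last q, hd r) * path_weight T m \<epsilon> \<delta> r"
  by (simp add: path_weight_def nodes_append)

lemma path_weight_snoc:
  "p \<noteq> [] \<Longrightarrow> path_weight T m \<epsilon> \<delta> (p @ [f]) = path_weight T m \<epsilon> \<delta> p * node_weight T m \<epsilon> \<delta> (last p, f)"
  using path_weight_append[of p "[f]"] by simp

lemma path_weight_append_at:
  assumes "r \<noteq> []" "hd r = f"
  shows "path_weight T m \<epsilon> \<delta> (q @ r) = path_weight T m \<epsilon> \<delta> (q @ [f]) * path_weight T m \<epsilon> \<delta> r"
  using assms path_weight_append[of q r] path_weight_snoc[where p=q and f=f] by (cases "q = []") auto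

lemma path_weight_closed_rotate:
  "path_weight T m \<epsilon> \<delta> (rotate n r @ [hd (rotate n r)]) = path_weight T m \<epsilon> \<delta> (r @ [hd r])"
proof -
  have "nodes (rotate n r @ [hd (rotate n r)]) = rotate n (nodes (r @ [hd r]))"
    by (simp add: nodes_closed rotate1_rotate_swap zip_rotate)
  then show ?thesis by (simp add: path_weight_def rotate_map[symmetric] prod_list_rotate)
qed

section \<open>Loops as rotation classes of simple cycles\<close>

definition simple_cycle :: "nat \<Rightarrow> edge list \<Rightarrow> bool" where
  "simple_cycle T r \<longleftrightarrow>
     2 \<le> length r \<and> distinct r \<and> set r \<subseteq> lattice_edges T \<and> chained T (r @ [hd r])"

definition loop_of :: "edge list \<Rightarrow> edge list set" where
  "loop_of r = (\<lambda>c. c @ [hd c]) ` range (\<lambda>n. rotate n r)"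

lemma simple_cycle_nonempty: "simple_cycle T r \<Longrightarrow> r \<noteq> []"
  by (auto simp: simple_cycle_def)

lemma simple_cycle_rotate1:
  assumes "simple_cycle T r" shows "simple_cycle T (rotate1 r)"
proof -
  obtain x xs where r: "r = x # xs" and "xs \<noteq> []"
    using assms unfolding simple_cycle_def by (metis Suc_1 Suc_le_length_iff list.size(3) not_one_le_zero)
  then have "chained T (xs @ [x] @ [hd xs])"
    using assms by (auto simp: simple_cycle_def chained_append chained_Cons)
  then show ?thesis using assms r \<open>xs \<noteq> []\<close> by (auto simp: simple_cycle_def)
qed

lemma simple_cycle_rotate: "simple_cycle T r \<Longrightarrow> simple_cycle T (rotate n r)"
  by (induction n) (simp_all add: simple_cycle_rotate1)

lemma is_cycle_iff_simple_cycle: "is_cycle T c \<longleftrightarrow> (\<exists>r. simple_cycle T r \<and> c = r @ [hd r])"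
proof
  assume c: "is_cycle T c"
  define r where "r = butlast c"
  have "c \<noteq> []" using c by (auto simp: is_cycle_def)
  then have c_eq: "c = r @ [last c]" by (simp add: r_def)
  have "length r = length c - 1" by (simp add: r_def)
  then have "r \<noteq> []" using c by (auto simp: is_cycle_def)
  then have "hd c = hd r" by (subst c_eq) simp
  then have "c = r @ [hd r]" using c c_eq by (simp add: is_cycle_def)
  moreover from this have "simple_cycle T r"
    using c by (auto simp: is_cycle_def simple_cycle_def r_def dest: in_set_butlastD)
  ultimately show "\<exists>r. simple_cycle T r \<and> c = r @ [hd r]" by blast
next
  assume "\<exists>r. simple_cycle T r \<and> c = r @ [hd r]"
  then obtain r where "simple_cycle T r" "c = r @ [hd r]" by blast
  moreover from this have "r \<noteq> []" by (auto simp: simple_cycle_def)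
  ultimately show "is_cycle T c" by (auto simp: simple_cycle_def is_cycle_def)
qed

lemma loop_of_eq_shifts:
  assumes "simple_cycle T r"
  shows "{c. is_cycle T c \<and> cyclic_shift (r @ [hd r]) c} = loop_of r"
proof -
  have "cyclic_shift (r @ [hd r]) c \<longleftrightarrow> c \<in> loop_of r" for c
    unfolding cyclic_shift_def loop_of_def by (simp add: image_iff)
  moreover have "is_cycle T c" if c: "c \<in> loop_of r" for c
  proof -
    obtain n where "c = rotate n r @ [hd (rotate n r)]"
      using c unfolding loop_of_def by blast
    then show ?thesis
      using simple_cycle_rotate[OF assms] is_cycle_iff_simple_cycle by blast
  qed
  ultimately show ?thesis by blast
qed

lemma loops_eq: "loops T = loop_of ` {r. simple_cycle T r}"
proof (intro equalityI subsetI)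
  fix L assume "L \<in> loops T"
  then obtain c where "is_cycle T c" and L: "L = {c'. is_cycle T c' \<and> cyclic_shift c c'}"
    unfolding loops_def by blast
  then obtain r where "simple_cycle T r" "c = r @ [hd r]"
    unfolding is_cycle_iff_simple_cycle by blast
  then show "L \<in> loop_of ` {r. simple_cycle T r}" using L loop_of_eq_shifts by blast
next
  fix L assume "L \<in> loop_of ` {r. simple_cycle T r}"
  then obtain r where r: "simple_cycle T r" and "L = loop_of r" by blast
  then have "L = {c'. is_cycle T c' \<and> cyclic_shift (r @ [hd r]) c'}"
    using loop_of_eq_shifts by blast
  moreover have "is_cycle T (r @ [hd r])" using r is_cycle_iff_simple_cycle by blast
  ultimately show "L \<in> loops T" unfolding loops_def by blast
qed

lemma finite_loops: "finite (loops T)"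
proof -
  have "finite {r. simple_cycle T r}"
    by (rule finite_subset[OF _ finite_subset_distinct[OF finite_lattice_edges]])
      (auto simp: simple_cycle_def)
  then show ?thesis by (simp add: loops_eq)
qed

lemma closed_in_loop_of: "r @ [hd r] \<in> loop_of r"
  unfolding loop_of_def by (rule image_eqI[of _ _ r]) (auto intro: range_eqI[where x = 0])

lemma loop_edges_loop_of:
  assumes "r \<noteq> []" shows "loop_edges (loop_of r) = set r"
proof -
  have "hd (rotate n r) \<in> set r" for n
    using assms by (metis hd_in_set rotate_is_Nil_conv set_rotate)
  then have "set (c @ [hd c]) = set r" if "c \<in> range (\<lambda>n. rotate n r)" for c
    using that by auto
  then show ?thesis
    unfolding loop_edges_def loop_of_def by (auto simp del: set_append)
qed

lemma loop_of_rotate: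
  assumes "r \<noteq> []" shows "loop_of (rotate k r) = loop_of r"
proof -
  have "rotate n r = rotate (n + (length r - 1) * k) (rotate k r)" for n
  proof -
    have "rotate n r = rotate (n + length r * k) r" by (metis rotate_conv_mod mod_mult_self2)
    also have "n + length r * k = n + (length r - 1) * k + k" using assms by (cases r) auto
    finally show ?thesis by (simp add: rotate_rotate)
  qed
  then show ?thesis by (auto simp: loop_of_def rotate_rotate)
qed

lemma loop_of_eq_imp_rotate:
  assumes "loop_of r = loop_of r'" shows "\<exists>n. r' = rotate n r"
proof -
  have "r' @ [hd r'] \<in> (\<lambda>c. c @ [hd c]) ` range (\<lambda>n. rotate n r)"
    using closed_in_loop_of[of r'] assms by (simp add: loop_of_def)
  then obtain n where "r' @ [hd r'] = rotate n r @ [hd (rotate n r)]" by blast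
  then show ?thesis by blast
qed

lemma rotate_eq_self_if_hd_eq:
  assumes "distinct r" "hd (rotate n r) = hd r" shows "rotate n r = r"
proof (cases "r = []")
  case False
  then have "r ! (n mod length r) = r ! 0"
    using assms(2) hd_rotate_conv_nth[OF False] hd_conv_nth[OF False] by simp
  moreover have "n mod length r < length r" "0 < length r" using False by auto
  ultimately have "n mod length r = 0" using nth_eq_iff_index_eq[OF assms(1)] by blast
  then show ?thesis by simp
qed simp

lemma arrow_loop_loop_of:
  assumes "\<delta>\<^sup>2 < 1"
  shows "arrow_loop T m \<epsilon> \<delta> (loop_of r) = - path_weight T m \<epsilon> \<delta> (r @ [hd r])"
proof -
  have "arrow_unsigned T m \<epsilon> \<delta> c = path_weight T m \<epsilon> \<delta> (r @ [hd r])" if "c \<in> loop_of r" for c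
    using that unfolding loop_of_def
    by (auto simp: arrow_unsigned_eq_path_weight[OF assms] path_weight_closed_rotate)
  then show ?thesis using closed_in_loop_of by (metis arrow_loop_def someI)
qed

definition config_edges :: "edge list set set \<Rightarrow> edge set" where
  "config_edges S = \<Union> (loop_edges ` S)"

lemma config_edges_insert [simp]: "config_edges (insert L S) = loop_edges L \<union> config_edges S"
  by (auto simp: config_edges_def)

lemma finite_loop_configs: "finite (loop_configs T)"
proof -
  have "loop_configs T \<subseteq> Pow (loops T)" by (auto simp: loop_configs_def)
  then show ?thesis using finite_loops by (meson finite_Pow_iff finite_subset)
qed

lemma finite_loop_config: "S \<in> loop_configs T \<Longrightarrow> finite S"
  using finite_loops by (auto simp: loop_configs_def intro: finite_subset)

lemma loop_configs_subset: "S \<in> loop_configs T \<Longrightarrow> S' \<subseteq> S \<Longrightarrow> S' \<in> loop_configs T"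
  unfolding loop_configs_def by blast

lemma loop_configs_insert:
  assumes "S \<in> loop_configs T" "simple_cycle T r" "config_edges S \<inter> set r = {}"
  shows "insert (loop_of r) S \<in> loop_configs T"
proof -
  have "loop_edges (loop_of r) = set r" "loop_of r \<in> loops T"
    using assms(2) by (auto simp: loop_edges_loop_of simple_cycle_nonempty loops_eq)
  then show ?thesis using assms(1,3) by (auto simp: loop_configs_def config_edges_def)
qed

lemma loop_through_edge:
  assumes "S \<in> loop_configs T" "f \<in> config_edges S"
  shows "\<exists>!r. simple_cycle T r \<and> loop_of r \<in> S \<and> hd r = f"
proof (rule ex_ex1I)
  obtain L where "L \<in> S" "f \<in> loop_edges L" using assms(2) by (auto simp: config_edges_def)
  moreover obtain r0 where "simple_cycle T r0" "L = loop_of r0"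
    using \<open>L \<in> S\<close> assms(1) by (auto simp: loop_configs_def loops_eq)
  ultimately have r0: "simple_cycle T r0" "loop_of r0 \<in> S" "f \<in> set r0"
    by (auto simp: loop_edges_loop_of simple_cycle_nonempty)
  then obtain i where "i < length r0" "r0 ! i = f" by (auto simp: in_set_conv_nth)
  moreover have "r0 \<noteq> []" using r0 by (simp add: simple_cycle_nonempty)
  ultimately have "hd (rotate i r0) = f" by (simp add: hd_rotate_conv_nth)
  moreover have "loop_of (rotate i r0) = loop_of r0" using \<open>r0 \<noteq> []\<close> by (rule loop_of_rotate)
  ultimately show "\<exists>r. simple_cycle T r \<and> loop_of r \<in> S \<and> hd r = f"
    using r0 simple_cycle_rotate by metis
next
  fix r1 r2
  assume r1: "simple_cycle T r1 \<and> loop_of r1 \<in> S \<and> hd r1 = f"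
    and r2: "simple_cycle T r2 \<and> loop_of r2 \<in> S \<and> hd r2 = f"
  then have "f \<in> loop_edges (loop_of r1)" "f \<in> loop_edges (loop_of r2)"
    by (metis hd_in_set loop_edges_loop_of simple_cycle_nonempty)+
  then have "loop_of r1 = loop_of r2" using assms(1) r1 r2 by (auto simp: loop_configs_def)
  then obtain n where "r2 = rotate n r1" using loop_of_eq_imp_rotate by blast
  then show "r1 = r2" using r1 r2 rotate_eq_self_if_hd_eq by (metis simple_cycle_def)
qed

definition loop_at :: "nat \<Rightarrow> edge \<Rightarrow> edge list set set \<Rightarrow> edge list" where
  "loop_at T f S = (THE r. simple_cycle T r \<and> loop_of r \<in> S \<and> hd r = f)"

lemma loop_at:
  assumes "S \<in> loop_configs T" "f \<in> config_edges S"
  shows "simple_cycle T (loop_at T f S)" "loop_of (loop_at T f S) \<in> S" "hd (loop_at T f S) = f"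
  using theI'[OF loop_through_edge[OF assms]] unfolding loop_at_def by blast+

lemma loop_at_eqI:
  assumes "S \<in> loop_configs T" "simple_cycle T r" "loop_of r \<in> S" "hd r = f"
  shows "loop_at T f S = r"
proof -
  have "f \<in> loop_edges (loop_of r)"
    using assms(2,4) by (metis hd_in_set loop_edges_loop_of simple_cycle_nonempty)
  then have "f \<in> config_edges S" using assms(3) by (auto simp: config_edges_def)
  then show ?thesis
    unfolding loop_at_def using assms by (blast intro: the1_equality[OF loop_through_edge])
qed

section \<open>Closing a path into a loop\<close>

type_synonym path_config = "edge list set set \<times> edge list"

definition configs_from :: "nat \<Rightarrow> edge \<Rightarrow> path_config set" where
  "configs_from T a = {(S, p). S \<in> loop_configs T \<and> is_path T p \<and> hd p = a
      \<and> config_edges S \<inter> set p = {}}"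

definition configs_into :: "nat \<Rightarrow> edge \<Rightarrow> edge \<Rightarrow> path_config set" where
  "configs_into T a f = {(S, p) \<in> configs_from T a. edge_end T (last p) = edge_start f}"

definition returning_configs :: "nat \<Rightarrow> edge \<Rightarrow> edge \<Rightarrow> path_config set" where
  "returning_configs T a f = {(S, p) \<in> configs_into T a f. f \<in> set p}"

definition looped_configs :: "nat \<Rightarrow> edge \<Rightarrow> edge \<Rightarrow> path_config set" where
  "looped_configs T a f = {(S, q). S \<in> loop_configs T \<and> f \<in> config_edges S
      \<and> config_edges S \<inter> set q = {}
      \<and> (q = [] \<and> f = a \<or> is_path T q \<and> hd q = a \<and> edge_end T (last q) = edge_start f)}"

definition close_loop :: "edge \<Rightarrow> path_config \<Rightarrow> path_config" where
  "close_loop f = (\<lambda>(S, p). (insert (loop_of (dropWhile (\<lambda>e. e \<noteq> f) p)) S, takeWhile (\<lambda>e. e \<noteq> f) p))"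

definition open_loop :: "nat \<Rightarrow> edge \<Rightarrow> path_config \<Rightarrow> path_config" where
  "open_loop T f = (\<lambda>(S, q). (S - {loop_of (loop_at T f S)}, q @ loop_at T f S))"

definition weight_to :: "nat \<Rightarrow> real \<Rightarrow> real \<Rightarrow> real \<Rightarrow> edge \<Rightarrow> path_config \<Rightarrow> complex" where
  "weight_to T m \<epsilon> \<delta> f = (\<lambda>(S, p). arrow_config T m \<epsilon> \<delta> S * path_weight T m \<epsilon> \<delta> (p @ [f]))"

lemma path_split_at_return:
  assumes "0 < T" "is_path T p" "f \<in> set p" "edge_end T (last p) = edge_start f"
  defines "q \<equiv> takeWhile (\<lambda>e. e \<noteq> f) p" and "r \<equiv> dropWhile (\<lambda>e. e \<noteq> f) p"
  shows "p = q @ r" "hd r = f" "simple_cycle T r" "set q \<inter> set r = {}"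
    "q = [] \<and> hd p = f \<or> is_path T q \<and> hd q = hd p \<and> edge_end T (last q) = edge_start f"
proof -
  show p: "p = q @ r" by (simp add: q_def r_def)
  have "r \<noteq> []" using assms(3) by (simp add: r_def)
  then show hd: "hd r = f" using hd_dropWhile[of "\<lambda>e. e \<noteq> f" p] by (simp add: r_def)
  have d: "distinct q" "distinct r" "set q \<inter> set r = {}" and E: "set p \<subseteq> lattice_edges T"
    using assms(2) p by (metis distinct_append is_path_def)+
  have ch: "chained T q" "chained T r" "q \<noteq> [] \<Longrightarrow> edge_end T (last q) = edge_start f"
    using assms(2) p hd \<open>r \<noteq> []\<close> chained_append[of T q r] by (auto simp: is_path_def)
  show "set q \<inter> set r = {}" by (fact d(3))
  show "q = [] \<and> hd p = f \<or> is_path T q \<and> hd q = hd p \<and> edge_end T (last q) = edge_start f"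
    using p hd d(1) ch E by (cases "q = []") (auto simp: is_path_def)
  have last: "last r = last p" using p \<open>r \<noteq> []\<close> by simp
  have "f \<in> lattice_edges T" using assms(3) E by blast
  then have "r \<noteq> [f]"
    using assms(4) last edge_end_neq_edge_start[OF assms(1)] by (metis last_ConsL)
  then have "2 \<le> length r" using \<open>r \<noteq> []\<close> hd by (cases r) (auto simp: Suc_le_eq)
  moreover have "chained T (r @ [hd r])"
    using ch(2) \<open>r \<noteq> []\<close> last assms(4) hd by (simp add: chained_append)
  moreover have "set r \<subseteq> lattice_edges T" using E p by auto
  ultimately show "simple_cycle T r" using d(2) by (simp add: simple_cycle_def)
qed

lemma close_loop_returning:
  assumes "x \<in> returning_configs T a f" "0 < T"
  obtains S q r where "x = (S, q @ r)" "hd r = f" "simple_cycle T r" "loop_of r \<notin> S"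
    "close_loop f x = (insert (loop_of r) S, q)" "close_loop f x \<in> looped_configs T a f"
proof -
  obtain S p where x: "x = (S, p)" by (cases x)
  have S: "S \<in> loop_configs T" and p: "is_path T p" "hd p = a" "f \<in> set p"
    "edge_end T (last p) = edge_start f" and disj: "config_edges S \<inter> set p = {}"
    using assms(1) by (auto simp: x returning_configs_def configs_into_def configs_from_def)
  define q r where "q = takeWhile (\<lambda>e. e \<noteq> f) p" and "r = dropWhile (\<lambda>e. e \<noteq> f) p"
  note split = path_split_at_return[OF assms(2) p(1,3,4), folded q_def r_def]
  have close: "close_loop f x = (insert (loop_of r) S, q)"
    by (simp add: x close_loop_def q_def r_def)
  have r_edges: "loop_edges (loop_of r) = set r"
    using split(3) by (simp add: loop_edges_loop_of simple_cycle_nonempty)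
  have "config_edges S \<inter> set r = {}" using disj split(1) by auto
  moreover have "r \<noteq> []" using split(3) by (rule simple_cycle_nonempty)
  ultimately have "loop_of r \<notin> S"
    using r_edges unfolding config_edges_def by (metis Int_absorb1 UN_upper set_empty)
  have "f \<in> set r" using split(2) \<open>r \<noteq> []\<close> by auto
  moreover have "insert (loop_of r) S \<in> loop_configs T"
    using loop_configs_insert[OF S split(3)] \<open>config_edges S \<inter> set r = {}\<close> .
  ultimately have "close_loop f x \<in> looped_configs T a f"
    using close r_edges split(1,4,5) disj p(2) by (auto simp: looped_configs_def)
  then show thesis using that x split close \<open>loop_of r \<notin> S\<close> by blast
qed

lemma open_loop_looped:
  assumes "y \<in> looped_configs T a f"
  obtains S q r where "y = (S, q)" "simple_cycle T r" "loop_of r \<in> S" "hd r = f"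
    "open_loop T f y = (S - {loop_of r}, q @ r)" "open_loop T f y \<in> returning_configs T a f"
proof -
  obtain S q where y: "y = (S, q)" by (cases y)
  have S: "S \<in> loop_configs T" "f \<in> config_edges S" and disj: "config_edges S \<inter> set q = {}"
    and q: "q = [] \<and> f = a \<or> is_path T q \<and> hd q = a \<and> edge_end T (last q) = edge_start f"
    using assms by (auto simp: y looped_configs_def)
  define r where "r = loop_at T f S"
  note r = loop_at[OF S, folded r_def]
  have open_eq: "open_loop T f y = (S - {loop_of r}, q @ r)" by (simp add: y open_loop_def r_def)
  have "r \<noteq> []" using r(1) by (rule simple_cycle_nonempty)
  have r_edges: "loop_edges (loop_of r) = set r"
    using \<open>r \<noteq> []\<close> by (rule loop_edges_loop_of)
  then have "set r \<subseteq> config_edges S" using r(2) by (auto simp: config_edges_def)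
  then have "set q \<inter> set r = {}" using disj by auto
  have r_path: "distinct r" "set r \<subseteq> lattice_edges T" "chained T r"
    "edge_end T (last r) = edge_start f"
    using r(1,3) \<open>r \<noteq> []\<close> by (auto simp: simple_cycle_def chained_append)
  have "is_path T (q @ r)" "hd (q @ r) = a"
    using q r_path \<open>set q \<inter> set r = {}\<close> \<open>r \<noteq> []\<close> r(3)
    by (auto simp: is_path_def chained_append)
  moreover have "config_edges (S - {loop_of r}) \<inter> set (q @ r) = {}"
  proof -
    have "loop_edges L \<inter> set r = {}" if "L \<in> S - {loop_of r}" for L
      using S(1) r(2) r_edges that unfolding loop_configs_def by blast
    then show ?thesis using disj unfolding config_edges_def by auto
  qed
  moreover have "f \<in> set (q @ r)" using r(3) \<open>r \<noteq> []\<close> by auto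
  ultimately have "open_loop T f y \<in> returning_configs T a f"
    using open_eq r_path(4) \<open>r \<noteq> []\<close> loop_configs_subset[OF S(1), of "S - {loop_of r}"]
    by (auto simp: returning_configs_def configs_into_def configs_from_def)
  then show thesis using that y r open_eq by blast
qed

lemma open_close_loop:
  assumes "x \<in> returning_configs T a f" "0 < T"
  shows "open_loop T f (close_loop f x) = x"
proof -
  obtain S q r where x: "x = (S, q @ r)" "hd r = f" "simple_cycle T r" "loop_of r \<notin> S"
    and close: "close_loop f x = (insert (loop_of r) S, q)" "close_loop f x \<in> looped_configs T a f"
    using close_loop_returning[OF assms] .
  have "loop_at T f (insert (loop_of r) S) = r"
    using close x(2,3) by (intro loop_at_eqI) (auto simp: looped_configs_def)
  then show ?thesis using x close(1) by (simp add: open_loop_def)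
qed

lemma close_open_loop:
  assumes "y \<in> looped_configs T a f"
  shows "close_loop f (open_loop T f y) = y"
proof -
  obtain S q r where y: "y = (S, q)" "simple_cycle T r" "loop_of r \<in> S" "hd r = f"
    and open_eq: "open_loop T f y = (S - {loop_of r}, q @ r)"
    using open_loop_looped[OF assms] by metis
  have "f \<notin> set q" using assms y(1) by (auto simp: looped_configs_def)
  moreover obtain r' where "r = f # r'"
    using y(2,4) simple_cycle_nonempty by (cases r) auto
  ultimately show ?thesis
    using y(1,3) open_eq by (simp add: close_loop_def takeWhile_append dropWhile_append insert_absorb)
qed

text \<open>The node (last r, f) passes from the path into the new loop, whose arrow carries
  a minus sign.\<close>

lemma weight_to_close_loop:
  assumes "x \<in> returning_configs T a f" "0 < T" "\<delta>\<^sup>2 < 1"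
  shows "weight_to T m \<epsilon> \<delta> f (close_loop f x) = - weight_to T m \<epsilon> \<delta> f x"
proof -
  obtain S q r where x: "x = (S, q @ r)" "hd r = f" "simple_cycle T r" "loop_of r \<notin> S"
    and close: "close_loop f x = (insert (loop_of r) S, q)" "close_loop f x \<in> looped_configs T a f"
    using close_loop_returning[OF assms(1,2)] .
  have "S \<in> loop_configs T"
    using close loop_configs_subset by (auto simp: looped_configs_def)
  then have "arrow_config T m \<epsilon> \<delta> (insert (loop_of r) S)
      = - path_weight T m \<epsilon> \<delta> (r @ [f]) * arrow_config T m \<epsilon> \<delta> S"
    using x(2,4) finite_loop_config arrow_loop_loop_of[OF assms(3)] by (simp add: arrow_config_def)
  moreover have "path_weight T m \<epsilon> \<delta> (q @ r @ [f])
      = path_weight T m \<epsilon> \<delta> (q @ [f]) * path_weight T m \<epsilon> \<delta> (r @ [f])"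
    using x(2) simple_cycle_nonempty[OF x(3)] by (intro path_weight_append_at) auto
  ultimately show ?thesis using x(1) close(1) by (simp add: weight_to_def)
qed

lemma sum_returning_configs:
  assumes "0 < T" "\<delta>\<^sup>2 < 1"
  shows "(\<Sum>x\<in>returning_configs T a f. weight_to T m \<epsilon> \<delta> f x)
       = - (\<Sum>y\<in>looped_configs T a f. weight_to T m \<epsilon> \<delta> f y)"
  unfolding sum_negf[symmetric]
proof (rule sum.reindex_bij_witness[where i = "open_loop T f" and j = "close_loop f"])
  fix x assume "x \<in> returning_configs T a f"
  then show "open_loop T f (close_loop f x) = x" "close_loop f x \<in> looped_configs T a f"
    "- weight_to T m \<epsilon> \<delta> f (close_loop f x) = weight_to T m \<epsilon> \<delta> f x"
    using open_close_loop close_loop_returning weight_to_close_loop assms by (metis, metis, simp)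
next
  fix y assume "y \<in> looped_configs T a f"
  then show "close_loop f (open_loop T f y) = y" "open_loop T f y \<in> returning_configs T a f"
    using close_open_loop open_loop_looped by metis+
qed

section \<open>The lattice Dirac equation\<close>

definition transfer :: "nat \<Rightarrow> real \<Rightarrow> real \<Rightarrow> real \<Rightarrow> edge \<Rightarrow> edge \<Rightarrow> complex" where
  "transfer T m \<epsilon> \<delta> e e' = (if edge_end T e = edge_start e' then node_weight T m \<epsilon> \<delta> (e, e') else 0)"

definition propagator_num :: "nat \<Rightarrow> real \<Rightarrow> real \<Rightarrow> real \<Rightarrow> edge \<Rightarrow> edge \<Rightarrow> complex" where
  "propagator_num T m \<epsilon> \<delta> a f =
     (\<Sum>(S, p)\<in>source_sink_configs T a f. arrow_config T m \<epsilon> \<delta> S * arrow_path T m \<epsilon> \<delta> p)"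

definition partition_function :: "nat \<Rightarrow> real \<Rightarrow> real \<Rightarrow> real \<Rightarrow> complex" where
  "partition_function T m \<epsilon> \<delta> = (\<Sum>S\<in>loop_configs T. arrow_config T m \<epsilon> \<delta> S)"

lemma propagator_eq:
  "propagator a f m \<epsilon> \<delta> T = propagator_num T m \<epsilon> \<delta> a f / partition_function T m \<epsilon> \<delta>"
  by (simp add: propagator_def propagator_num_def partition_function_def)

lemma source_sink_configs_eq: "source_sink_configs T a f = {x \<in> configs_from T a. last (snd x) = f}"
  by (auto simp: source_sink_configs_def configs_from_def config_edges_def)

lemma finite_configs_from: "finite (configs_from T a)"
proof -
  have "configs_from T a \<subseteq> loop_configs T \<times> {p. is_path T p}" by (auto simp: configs_from_def)
  then show ?thesis using finite_loop_configs finite_paths by (rule finite_subset[OF _ finite_SigmaI])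
qed

lemma looped_configs_self:
  "looped_configs T a a = (\<lambda>S. (S, [])) ` {S \<in> loop_configs T. a \<in> config_edges S}"
proof (intro equalityI subsetI)
  fix y assume y: "y \<in> looped_configs T a a"
  obtain S q where yq: "y = (S, q)" by (cases y)
  have "S \<in> loop_configs T" "a \<in> config_edges S" "config_edges S \<inter> set q = {}"
    "q = [] \<or> hd q = a"
    using y by (auto simp: yq looped_configs_def)
  moreover from this have "q = []" by (metis disjoint_iff hd_in_set)
  ultimately show "y \<in> (\<lambda>S. (S, [])) ` {S \<in> loop_configs T. a \<in> config_edges S}"
    using yq by blast
next
  fix y :: path_config
  assume "y \<in> (\<lambda>S. (S, [])) ` {S \<in> loop_configs T. a \<in> config_edges S}"
  then obtain S where "y = (S, [])" "S \<in> loop_configs T" "a \<in> config_edges S" by blast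
  then show "y \<in> looped_configs T a a" by (simp add: looped_configs_def)
qed

lemma source_sink_configs_self:
  assumes "a \<in> lattice_edges T"
  shows "source_sink_configs T a a = (\<lambda>S. (S, [a])) ` {S \<in> loop_configs T. a \<notin> config_edges S}"
proof (intro equalityI subsetI)
  fix x assume x: "x \<in> source_sink_configs T a a"
  obtain S p where xp: "x = (S, p)" by (cases x)
  have S: "S \<in> loop_configs T" "\<forall>L\<in>S. loop_edges L \<inter> set p = {}"
    and p: "is_path T p" "hd p = a" "last p = a"
    using x by (auto simp: xp source_sink_configs_def)
  from p have "p = [a]"
    by (cases p rule: rev_cases) (auto simp: is_path_def hd_append split: if_splits)
  then have "a \<notin> config_edges S" using S(2) by (auto simp: config_edges_def)
  then show "x \<in> (\<lambda>S. (S, [a])) ` {S \<in> loop_configs T. a \<notin> config_edges S}"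
    using xp S(1) \<open>p = [a]\<close> by blast
next
  fix x :: path_config
  assume "x \<in> (\<lambda>S. (S, [a])) ` {S \<in> loop_configs T. a \<notin> config_edges S}"
  then obtain S where "x = (S, [a])" "S \<in> loop_configs T" "a \<notin> config_edges S" by blast
  then show "x \<in> source_sink_configs T a a"
    using assms by (auto simp: source_sink_configs_def is_path_def config_edges_def)
qed

lemma source_sink_configs_eq_snoc:
  assumes "a \<noteq> f" "f \<in> lattice_edges T"
  shows "source_sink_configs T a f = (\<lambda>(S, p). (S, p @ [f])) `
           {x \<in> configs_into T a f. f \<notin> set (snd x) \<and> f \<notin> config_edges (fst x)}"
proof (intro equalityI subsetI)
  fix x assume x: "x \<in> source_sink_configs T a f"
  obtain S p where xp: "x = (S, p)" by (cases x)
  have S: "S \<in> loop_configs T" "config_edges S \<inter> set p = {}"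
    and p: "is_path T p" "hd p = a" "last p = f"
    using x by (auto simp: xp source_sink_configs_def config_edges_def)
  define q where "q = butlast p"
  have "p \<noteq> []" using p(1) by (simp add: is_path_def)
  then have p_eq: "p = q @ [f]" using p(3) unfolding q_def by (metis append_butlast_last_id)
  then have "q \<noteq> []" using p(2) assms(1) by (cases q) auto
  then have q: "is_path T q" "edge_end T (last q) = edge_start f" "f \<notin> set q" "hd q = a"
    using p(1,2) p_eq is_path_snoc[of T q f] by auto
  have "f \<notin> config_edges S" "config_edges S \<inter> set q = {}" using S(2) p_eq by auto
  then show "x \<in> (\<lambda>(S, p). (S, p @ [f])) `
      {x \<in> configs_into T a f. f \<notin> set (snd x) \<and> f \<notin> config_edges (fst x)}"
    using xp S(1) q p_eq
    by (auto simp: configs_into_def configs_from_def intro!: image_eqI[of _ _ "(S, q)"])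
next
  fix x assume "x \<in> (\<lambda>(S, p). (S, p @ [f])) `
      {x \<in> configs_into T a f. f \<notin> set (snd x) \<and> f \<notin> config_edges (fst x)}"
  then obtain S p where x: "x = (S, p @ [f])" "S \<in> loop_configs T" "is_path T p" "hd p = a"
    "config_edges S \<inter> set p = {}" "edge_end T (last p) = edge_start f" "f \<notin> set p"
    "f \<notin> config_edges S"
    by (auto simp: configs_into_def configs_from_def)
  moreover have "p \<noteq> []" using x(3) by (simp add: is_path_def)
  ultimately show "x \<in> source_sink_configs T a f"
    using assms(2) is_path_snoc[of T p f] by (auto simp: source_sink_configs_def config_edges_def)
qed

context
  fixes T :: nat and m \<epsilon> \<delta> :: real
  assumes T: "0 < T" and \<delta>: "\<delta>\<^sup>2 < 1"
begin

lemma sum_transfer_eq_sum_configs_into: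
  assumes "f \<in> lattice_edges T"
  shows "(\<Sum>e\<in>lattice_edges T. propagator_num T m \<epsilon> \<delta> a e * transfer T m \<epsilon> \<delta> e f)
       = (\<Sum>x\<in>configs_into T a f. weight_to T m \<epsilon> \<delta> f x)"
proof -
  let ?w = "\<lambda>x. arrow_config T m \<epsilon> \<delta> (fst x) * path_weight T m \<epsilon> \<delta> (snd x)
                * transfer T m \<epsilon> \<delta> (last (snd x)) f"
  have "(\<Sum>e\<in>lattice_edges T. propagator_num T m \<epsilon> \<delta> a e * transfer T m \<epsilon> \<delta> e f)
      = (\<Sum>e\<in>lattice_edges T. \<Sum>x\<in>{x \<in> configs_from T a. last (snd x) = e}. ?w x)"
    by (simp add: propagator_num_def source_sink_configs_eq sum_distrib_right split_beta
        arrow_path_def arrow_unsigned_eq_path_weight[OF \<delta>])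
  also have "\<dots> = (\<Sum>x\<in>configs_from T a. ?w x)"
    by (rule sum.group[OF finite_configs_from finite_lattice_edges])
      (auto simp: configs_from_def is_path_def)
  also have "\<dots> = (\<Sum>x\<in>configs_into T a f. ?w x)"
    by (rule sum.mono_neutral_right[OF finite_configs_from])
      (auto simp: configs_into_def transfer_def)
  also have "\<dots> = (\<Sum>x\<in>configs_into T a f. weight_to T m \<epsilon> \<delta> f x)"
    by (rule sum.cong) (auto simp: configs_into_def configs_from_def is_path_def transfer_def
        weight_to_def path_weight_snoc)
  finally show ?thesis .
qed

lemma sum_configs_into_self:
  assumes "a \<in> lattice_edges T"
  shows "(\<Sum>x\<in>configs_into T a a. weight_to T m \<epsilon> \<delta> a x)
       = propagator_num T m \<epsilon> \<delta> a a - partition_function T m \<epsilon> \<delta>"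
proof -
  have "configs_into T a a = returning_configs T a a"
    by (auto simp: returning_configs_def configs_into_def configs_from_def is_path_def)
  then have into: "(\<Sum>x\<in>configs_into T a a. weight_to T m \<epsilon> \<delta> a x)
      = - (\<Sum>S | S \<in> loop_configs T \<and> a \<in> config_edges S. arrow_config T m \<epsilon> \<delta> S)"
    using sum_returning_configs[OF T \<delta>]
    by (simp add: looped_configs_self sum.reindex inj_on_def weight_to_def)
  have "propagator_num T m \<epsilon> \<delta> a a
      = (\<Sum>S | S \<in> loop_configs T \<and> a \<notin> config_edges S. arrow_config T m \<epsilon> \<delta> S)"
    by (simp add: propagator_num_def source_sink_configs_self[OF assms] sum.reindex inj_on_def
        arrow_path_def arrow_unsigned_eq_path_weight[OF \<delta>])
  moreover have "partition_function T m \<epsilon> \<delta>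
      = (\<Sum>S | S \<in> loop_configs T \<and> a \<in> config_edges S. arrow_config T m \<epsilon> \<delta> S)
      + (\<Sum>S | S \<in> loop_configs T \<and> a \<notin> config_edges S. arrow_config T m \<epsilon> \<delta> S)"
    unfolding partition_function_def
      sum.Int_Diff[OF finite_loop_configs, where B = "{S. a \<in> config_edges S}"]
    by (simp add: Int_def set_diff_eq conj_commute)
  ultimately show ?thesis using into by simp
qed

lemma sum_configs_into_ne:
  assumes "a \<noteq> f" "f \<in> lattice_edges T"
  shows "(\<Sum>x\<in>configs_into T a f. weight_to T m \<epsilon> \<delta> f x) = propagator_num T m \<epsilon> \<delta> a f"
proof -
  let ?w = "weight_to T m \<epsilon> \<delta> f"
  let ?on_path = "{x. f \<in> set (snd x)}" and ?on_loop = "{x. f \<in> config_edges (fst x)}"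
  have fin: "finite (configs_into T a f)"
    using finite_configs_from by (rule finite_subset[rotated]) (auto simp: configs_into_def)
  have "configs_into T a f \<inter> ?on_path = returning_configs T a f"
    by (auto simp: returning_configs_def)
  moreover have "(configs_into T a f - ?on_path) \<inter> ?on_loop = looped_configs T a f"
    using assms(1) by (auto simp: looped_configs_def configs_into_def configs_from_def is_path_def)
  moreover have "sum ?w (configs_into T a f - ?on_path - ?on_loop) = propagator_num T m \<epsilon> \<delta> a f"
    by (simp add: propagator_num_def source_sink_configs_eq_snoc[OF assms] sum.reindex inj_on_def
        set_diff_eq weight_to_def arrow_path_def arrow_unsigned_eq_path_weight[OF \<delta>] split_beta)
  ultimately show ?thesis
    using sum.Int_Diff[OF fin, of ?w ?on_path] sum.Int_Diff[of "configs_into T a f - ?on_path" ?w ?on_loop]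
      sum_returning_configs[OF T \<delta>] fin by simp
qed

lemma dirac_equation:
  assumes "a \<in> lattice_edges T" "f \<in> lattice_edges T"
  shows "(\<Sum>e\<in>lattice_edges T. propagator_num T m \<epsilon> \<delta> a e * (of_bool (e = f) - transfer T m \<epsilon> \<delta> e f))
       = of_bool (a = f) * partition_function T m \<epsilon> \<delta>"
proof -
  have "(\<Sum>e\<in>lattice_edges T. propagator_num T m \<epsilon> \<delta> a e * (of_bool (e = f) - transfer T m \<epsilon> \<delta> e f))
      = propagator_num T m \<epsilon> \<delta> a f - (\<Sum>x\<in>configs_into T a f. weight_to T m \<epsilon> \<delta> f x)"
    using assms(2) finite_lattice_edges sum_transfer_eq_sum_configs_into[OF assms(2)]
    by (simp add: right_diff_distrib sum_subtractf)
  then show ?thesis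
    using sum_configs_into_self[OF assms(1)] sum_configs_into_ne[OF _ assms(2)] by (cases "a = f") auto
qed

end

section \<open>The sign form is preserved by the transfer matrix\<close>

lemma node_weight_at_vertex:
  assumes "\<delta>\<^sup>2 < 1"
  obtains t K :: complex where "K * K = 1 - t * t" "K \<noteq> 0"
    "\<And>e b. edge_end T e = v \<Longrightarrow>
       node_weight T m \<epsilon> \<delta> (e, b) = (if edge_dir e = edge_dir b then 1 else t) / K"
proof -
  have pos: "0 < 1 - \<delta>\<^sup>2" "0 < 1 + m\<^sup>2 * \<epsilon>\<^sup>2"
    using assms by (simp_all add: add_pos_nonneg)
  define t K where "t = (if even (fst v) then complex_of_real (- \<delta>) else - \<i> * complex_of_real (m * \<epsilon>))"
    and "K = complex_of_real (if even (fst v) then sqrt (1 - \<delta>\<^sup>2) else sqrt (1 + m\<^sup>2 * \<epsilon>\<^sup>2))"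
  have "K * K = 1 - t * t"
    using pos by (simp add: t_def K_def flip: of_real_mult) (simp add: power2_eq_square algebra_simps)
  moreover have "K \<noteq> 0" using pos by (simp add: K_def)
  moreover have "node_weight T m \<epsilon> \<delta> (e, b) = (if edge_dir e = edge_dir b then 1 else t) / K"
    if "edge_end T e = v" for e b
    using that by (simp add: node_weight_def node_even_def is_turn_def orthogonal_def t_def K_def)
  ultimately show thesis using that by blast
qed

definition dir_sign :: "edge \<Rightarrow> complex" where
  "dir_sign e = (if edge_dir e then 1 else -1)"

lemma dir_sign_sq: "dir_sign e * dir_sign e = 1"
  by (simp add: dir_sign_def)

lemma sum_transfer_dir_sign:
  assumes "0 < T" "\<delta>\<^sup>2 < 1" "c \<in> lattice_edges T" "c' \<in> lattice_edges T"
  shows "(\<Sum>b\<in>lattice_edges T. transfer T m \<epsilon> \<delta> c b * dir_sign b * transfer T m \<epsilon> \<delta> c' b)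
       = of_bool (c = c') * dir_sign c"
proof -
  define v where "v = edge_end T c"
  define b1 b0 where "b1 = (fst v, snd v, True)" and "b0 = (fst v, snd v, False)"
  have b: "edge_start b1 = v" "edge_start b0 = v" "edge_dir b1" "\<not> edge_dir b0" "b1 \<noteq> b0"
    by (simp_all add: b1_def b0_def edge_start_def edge_dir_def)
  let ?t = "\<lambda>b. transfer T m \<epsilon> \<delta> c b * dir_sign b * transfer T m \<epsilon> \<delta> c' b"
  have "b1 \<in> lattice_edges T" "b0 \<in> lattice_edges T"
    using edge_end_in_lattice[OF assms(1,3)] by (simp_all add: b1_def b0_def v_def)
  moreover have "?t b = 0" if "b \<notin> {b1, b0}" for b
  proof -
    have "edge_start b \<noteq> v"
      using that by (cases b) (auto simp: b1_def b0_def edge_start_def)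
    then show ?thesis by (simp add: transfer_def v_def)
  qed
  ultimately have sum: "(\<Sum>b\<in>lattice_edges T. ?t b) = ?t b1 + ?t b0"
    using sum.mono_neutral_right[OF finite_lattice_edges, where S = "{b1, b0}" and g = ?t] b(5) by auto
  show ?thesis
  proof (cases "edge_end T c' = v")
    case False
    then have "c \<noteq> c'" by (auto simp: v_def)
    then show ?thesis unfolding sum using False b by (simp add: transfer_def)
  next
    case True
    obtain t K where K: "K * K = 1 - t * t" "K \<noteq> 0" and weight:
      "\<And>e b. edge_end T e = v \<Longrightarrow>
         node_weight T m \<epsilon> \<delta> (e, b) = (if edge_dir e = edge_dir b then 1 else t) / K"
      using node_weight_at_vertex[OF assms(2)] by metis
    have "c = c' \<longleftrightarrow> edge_dir c = edge_dir c'"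
      using edge_end_inj[OF assms(1,3,4)] True by (auto simp: v_def)
    moreover have "?t b1 + ?t b0 = of_bool (edge_dir c = edge_dir c') * dir_sign c"
      using two_by_two_sign_orthogonal[OF K, of "edge_dir c" "edge_dir c'"] b True
      by (simp add: transfer_def weight v_def dir_sign_def)
    ultimately show ?thesis by (simp add: sum)
  qed
qed

lemma propagator_swap:
  assumes "0 < T" "\<delta>\<^sup>2 < 1" "a \<in> lattice_edges T" "f \<in> lattice_edges T" "a \<noteq> f"
  shows "propagator f a m \<epsilon> \<delta> T = - dir_sign a * dir_sign f * propagator a f m \<epsilon> \<delta> T"
proof (cases "partition_function T m \<epsilon> \<delta> = 0")
  case True
  \<comment> \<open>then both propagators are 0, by the convention x / 0 = 0\<close>
  then show ?thesis by (simp add: propagator_eq)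
next
  case False
  define G where "G x y = propagator x y m \<epsilon> \<delta> T" for x y
  have "(\<Sum>e\<in>lattice_edges T. G x e * (of_bool (e = y) - transfer T m \<epsilon> \<delta> e y)) = of_bool (x = y)"
    if "x \<in> lattice_edges T" "y \<in> lattice_edges T" for x y
    using dirac_equation[OF assms(1,2) that] False
    by (simp add: G_def propagator_eq sum_divide_distrib[symmetric])
  from left_inverse_sign_symmetry[OF finite_lattice_edges this sum_transfer_dir_sign[OF assms(1,2)]
      dir_sign_sq assms(3,4)]
  have key: "dir_sign a * dir_sign f * G f a = - G a f" using assms(5) by simp
  have "G f a = (dir_sign a * dir_sign a) * (dir_sign f * dir_sign f) * G f a"
    by (simp add: dir_sign_sq)
  also have "\<dots> = dir_sign a * dir_sign f * (dir_sign a * dir_sign f * G f a)"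
    by (simp only: mult_ac)
  also have "\<dots> = - dir_sign a * dir_sign f * G a f"
    by (simp add: key)
  finally show ?thesis by (simp add: G_def)
qed

theorem proposition13:
  fixes T :: nat and \<epsilon> m \<delta> :: real and a f :: edge
  assumes "T > 0" and "\<epsilon> > 0" and "m > 0" and "0 < \<delta>" and "\<delta> < 1"
    and "a \<in> lattice_edges T" and "f \<in> lattice_edges T" and "a \<noteq> f"
  shows "(orthogonal a f \<longrightarrow> propagator a f m \<epsilon> \<delta> T = propagator f a m \<epsilon> \<delta> T)
       \<and> (parallel a f \<longrightarrow> propagator a f m \<epsilon> \<delta> T = - propagator f a m \<epsilon> \<delta> T)"
proof -
  have "\<delta>\<^sup>2 < 1" using assms(4,5) by (simp add: power_less_one_iff abs_less_iff)
  from propagator_swap[OF assms(1) this assms(6-8)]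
  show ?thesis
    by (cases "edge_dir a"; cases "edge_dir f") (simp_all add: orthogonal_def parallel_def dir_sign_def)
qed

end
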